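(* Let $x,u,v\in\mathbb{R}^N$ with $|u|=|v|=r>0$. Assume that $B_r(x+u)\cap B_r(-x-v)=\emptyset$ and $B_r(x-u)\cap B_r(-x+v)=\emptyset$. Then $|u-v|\le 2|x|$.
   Context: $B_r(y)$ denotes the open Euclidean ball of radius $r$ centered at $y$. *)

theory Defs
  imports "HOL-Analysis.Analysis"
begin

end

theory Submission
  imports Defs
begin

text \<open>Put \<open>y = 2x\<close> and \<open>s = u + v\<close>. The two disjointness hypotheses say that the centres are
  at least \<open>2r\<close> apart, i.e. \<open>|y + s| \<ge> 2r\<close> and \<open>|y - s| \<ge> 2r\<close>. By the parallelogram law,
  \<open>2|y|\<^sup>2 + 2|s|\<^sup>2 = |y + s|\<^sup>2 + |y - s|\<^sup>2 \<ge> 8r\<^sup>2 = 2|u|\<^sup>2 + 2|v|\<^sup>2 = |s|\<^sup>2 + |u - v|\<^sup>2\<close>,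
  hence \<open>|u - v| \<le> |y| = 2|x|\<close>.\<close>

lemma disjoint_ball_iff:
  fixes a b :: "'a::real_normed_vector"
  assumes "r > 0" "s > 0"
  shows "ball a r \<inter> ball b s = {} \<longleftrightarrow> r + s \<le> dist a b"
proof
  assume disjoint: "ball a r \<inter> ball b s = {}"
  show "r + s \<le> dist a b"
  proof (rule ccontr)
    assume "\<not> r + s \<le> dist a b"
    then have close: "dist a b < r + s" by simp
    define t where "t = r / (r + s)"
    define m where "m = a + t *\<^sub>R (b - a)"
    have t: "0 < t" "t < 1" "t * (r + s) = r" "(1 - t) * (r + s) = s"
      using assms by (simp_all add: t_def field_simps)
    have "dist a m = t * dist a b"
      using t by (simp add: m_def dist_norm norm_minus_commute)
    also have "\<dots> < t * (r + s)"
      using close t(1) by (rule mult_strict_left_mono)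
    also have "\<dots> = r"
      by (rule t(3))
    finally have "m \<in> ball a r" by simp
    have "b - m = (1 - t) *\<^sub>R (b - a)"
      by (simp add: m_def algebra_simps)
    then have "dist b m = (1 - t) * dist a b"
      using t by (simp add: dist_norm norm_minus_commute)
    also have "\<dots> < (1 - t) * (r + s)"
      using close by (rule mult_strict_left_mono) (use t(2) in simp)
    also have "\<dots> = s"
      by (rule t(4))
    finally have "m \<in> ball b s" by simp
    with \<open>m \<in> ball a r\<close> disjoint show False by blast
  qed
qed (rule disjoint_ballI)

lemma parallelogram_law:
  fixes x y :: "'a::real_inner"
  shows "(norm (x + y))\<^sup>2 + (norm (x - y))\<^sup>2 = 2 * (norm x)\<^sup>2 + 2 * (norm y)\<^sup>2"
  by (simp add: power2_norm_eq_inner algebra_simps inner_commute)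

lemma norm_diff_le_if_norm_add_diff_ge:
  fixes y u v :: "'a::real_inner"
  assumes "r \<ge> 0" "norm u = r" "norm v = r"
    and "2 * r \<le> norm (y + (u + v))" "2 * r \<le> norm (y - (u + v))"
  shows "norm (u - v) \<le> norm y"
proof (rule power2_le_imp_le)
  have "(2 * r)\<^sup>2 \<le> (norm (y + (u + v)))\<^sup>2" "(2 * r)\<^sup>2 \<le> (norm (y - (u + v)))\<^sup>2"
    using assms(1) by (simp_all only: power_mono[OF assms(4)] power_mono[OF assms(5)])
  then have "8 * r\<^sup>2 \<le> 2 * (norm y)\<^sup>2 + 2 * (norm (u + v))\<^sup>2"
    using parallelogram_law[of y "u + v"] by (simp add: power_mult_distrib)
  moreover have "(norm (u + v))\<^sup>2 + (norm (u - v))\<^sup>2 = 4 * r\<^sup>2"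
    using assms(2,3) parallelogram_law[of u v] by simp
  ultimately show "(norm (u - v))\<^sup>2 \<le> (norm y)\<^sup>2" by linarith
qed simp

theorem lemma2p1:
  fixes x u v :: "real ^ 'n" and r :: real
  assumes "r > 0" and "norm u = r" and "norm v = r"
    and "ball (x + u) r \<inter> ball (- x - v) r = {}"
    and "ball (x - u) r \<inter> ball (- x + v) r = {}"
  shows "norm (u - v) \<le> 2 * norm x"
proof -
  have "2 * r \<le> dist (x + u) (- x - v)" "2 * r \<le> dist (x - u) (- x + v)"
    using assms(4,5) by (simp_all only: mult_2 disjoint_ball_iff[OF assms(1) assms(1)])
  moreover have "dist (x + u) (- x - v) = norm (2 *\<^sub>R x + (u + v))"
    "dist (x - u) (- x + v) = norm (2 *\<^sub>R x - (u + v))"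
    by (simp_all add: dist_norm scaleR_2 algebra_simps)
  ultimately have "norm (u - v) \<le> norm (2 *\<^sub>R x)"
    using assms(1-3) by (intro norm_diff_le_if_norm_add_diff_ge) simp_all
  then show ?thesis by simp
qed

end
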